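(* Let $n\ge 1$, let $f=(f_1,\dots,f_n):\{0,1\}^n\to\{0,1\}^n$ be a Boolean model, and let $h$ be a multivalued refinement of $f$ on $X=\prod_{j=1}^n\{0,1,\dots,m_j\}$ (with $m_j\ge 1$ integers, at least one $m_j>1$) built by the threshold construction described in the context. Let $J=\{j\in\{1,\dots,n\}: m_j>1\}$ and suppose that no component $g_j$ with $j\in J$ is self-inhibited. Let $a,a'\in\{0,1\}^n$, and let $b,b'\in X$ be obtained from $a$ (resp. $a'$) by replacing, for each $j\in J$, the coordinate $a_j$ (resp. $a'_j$) by $m_j$ whenever it equals $1$ (other coordinates unchanged). If there exists a trajectory from $a$ to $a'$ in the asynchronous state transition graph of $f$, then there exists a trajectory from $b$ to $b'$ in the asynchronous state transition graph of $h$.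
   Context: Components $g_1,\dots,g_n$; a state $x$ gives activity levels $x_j$. Asynchronous dynamics of a map $h:X\to X$ (Boolean or multivalued, $X=\prod_j\{0,\dots,m_j\}$ with $h_j(x)-x_j\in\{-1,0,1\}$): there is a transition $x\to y$ if there is $i_0$ with $x_{i_0}\neq h_{i_0}(x)$, $y_{i_0}=x_{i_0}+\mathrm{sign}(h_{i_0}(x)-x_{i_0})$, and $y_j=x_j$ for $j\ne i_0$. A trajectory is a finite sequence of consecutive transitions. For $x\in X$, $\alpha(x)=\{x'\in\{0,1\}^n:\forall j,\ (x_j=0\Rightarrow x'_j=0)\text{ and }(x_j=m_j\Rightarrow x'_j=1)\}$. A multivalued model $h:X\to X$ (with $h_j(x)-x_j\in\{-1,0,1\}$) is a refinement of $f$ if for all $x\in X$ and $j$: $h_j(x)<x_j\Rightarrow\exists x'\in\alpha(x),\ f_j(x')<x'_j$, and $h_j(x)>x_j\Rightarrow\exists x'\in\alpha(x),\ f_j(x')>x'_j$. Threshold construction: write each $f_{j_0}$ in a shortest disjunctive normal form $f_{j_0}(x)=\bigvee_{h}\bigwedge_{k} w_{j_0,h,k}x_{j_{j_0,h,k}}$, where each $w$ is either empty or negation $\neg$. For each literal with variable index $j=j_{j_0,h,k}$ such that $m_j>1$, choose a threshold $s\in\{0,\dots,m_j-1\}$ and replace the literal $x_j$ by the condition $x_j\ge s+1$ and the literal $\neg x_j$ by $x_j<s+1$ (literals with $m_j=1$ are unchanged). This yields a Boolean-valued function on $X$; set $\mathcal H_{j_0}(x)=+1$ if it is true and $-1$ otherwise,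 and define $h_j(x)=\max(0,\min(m_j,x_j+\mathcal H_j(x)))$. Component $g_j$ is self-inhibited if the literal $\neg x_j$ occurs in the (shortest DNF of) $f_j$. *)

theory Defs
  imports Main
begin

text \<open>Components are indexed by 0..<n. A state is a function nat => nat; only the
coordinates j < n are meaningful, the others are fixed to 0.
Boolean states are the states of the space with all m j = 1.\<close>

definition state_space :: "nat \<Rightarrow> (nat \<Rightarrow> nat) \<Rightarrow> (nat \<Rightarrow> nat) set" where
  "state_space n m = {x. (\<forall>j<n. x j \<le> m j) \<and> (\<forall>j\<ge>n. x j = 0)}"

abbreviation bool_space :: "nat \<Rightarrow> (nat \<Rightarrow> nat) set" where
  "bool_space n \<equiv> state_space n (\<lambda>_. 1)"

definition async_trans ::
  "nat \<Rightarrow> (nat \<Rightarrow> nat) \<Rightarrow> ((nat \<Rightarrow> nat) \<Rightarrow> nat \<Rightarrow> nat) \<Rightarrow> (nat \<Rightarrow> nat) \<Rightarrow> (nat \<Rightarrow> nat) \<Rightarrow> bool" where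
  "async_trans n m g x y \<longleftrightarrow> x \<in> state_space n m \<and>
     (\<exists>i<n. x i \<noteq> g x i \<and> y = x(i := (if g x i > x i then x i + 1 else x i - 1)))"

definition trajectory ::
  "nat \<Rightarrow> (nat \<Rightarrow> nat) \<Rightarrow> ((nat \<Rightarrow> nat) \<Rightarrow> nat \<Rightarrow> nat) \<Rightarrow> (nat \<Rightarrow> nat) \<Rightarrow> (nat \<Rightarrow> nat) \<Rightarrow> bool" where
  "trajectory n m g x y \<longleftrightarrow> (async_trans n m g)\<^sup>*\<^sup>* x y"

definition alpha :: "nat \<Rightarrow> (nat \<Rightarrow> nat) \<Rightarrow> (nat \<Rightarrow> nat) \<Rightarrow> (nat \<Rightarrow> nat) set" where
  "alpha n m x = {x' \<in> bool_space n. \<forall>j<n. (x j = 0 \<longrightarrow> x' j = 0) \<and> (x j = m j \<longrightarrow> x' j = 1)}"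

definition refinement ::
  "nat \<Rightarrow> (nat \<Rightarrow> nat) \<Rightarrow> ((nat \<Rightarrow> nat) \<Rightarrow> nat \<Rightarrow> nat) \<Rightarrow> ((nat \<Rightarrow> nat) \<Rightarrow> nat \<Rightarrow> nat) \<Rightarrow> bool" where
  "refinement n m h f \<longleftrightarrow> (\<forall>x\<in>state_space n m. \<forall>j<n.
      (h x j < x j \<longrightarrow> (\<exists>x'\<in>alpha n m x. f x' j < x' j)) \<and>
      (h x j > x j \<longrightarrow> (\<exists>x'\<in>alpha n m x. f x' j > x' j)))"

text \<open>Disjunctive normal forms: a literal is (variable index, polarity), True meaning
x_j and False meaning the negation of x_j; a clause is a conjunction (list) of literals,
a DNF a disjunction (list) of clauses.\<close>
type_synonym literal = "nat \<times> bool"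
type_synonym dnf = "literal list list"

definition dnf_vars_ok :: "nat \<Rightarrow> dnf \<Rightarrow> bool" where
  "dnf_vars_ok n D \<longleftrightarrow> (\<forall>c\<in>set D. \<forall>l\<in>set c. fst l < n)"

definition eval_dnf :: "dnf \<Rightarrow> (nat \<Rightarrow> nat) \<Rightarrow> bool" where
  "eval_dnf D x \<longleftrightarrow> (\<exists>c\<in>set D. \<forall>l\<in>set c. (x (fst l) = 1) = snd l)"

definition dnf_size :: "dnf \<Rightarrow> nat" where
  "dnf_size D = sum_list (map length D)"

definition represents :: "nat \<Rightarrow> ((nat \<Rightarrow> nat) \<Rightarrow> nat \<Rightarrow> nat) \<Rightarrow> nat \<Rightarrow> dnf \<Rightarrow> bool" where
  "represents n f j D \<longleftrightarrow> dnf_vars_ok n D \<and> (\<forall>x\<in>bool_space n. (f x j = 1) = eval_dnf D x)"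

definition shortest_dnf :: "nat \<Rightarrow> ((nat \<Rightarrow> nat) \<Rightarrow> nat \<Rightarrow> nat) \<Rightarrow> nat \<Rightarrow> dnf \<Rightarrow> bool" where
  "shortest_dnf n f j D \<longleftrightarrow> represents n f j D \<and>
     (\<forall>D'. represents n f j D' \<longrightarrow> dnf_size D \<le> dnf_size D')"

definition boolean_model :: "nat \<Rightarrow> ((nat \<Rightarrow> nat) \<Rightarrow> nat \<Rightarrow> nat) \<Rightarrow> bool" where
  "boolean_model n f \<longleftrightarrow> (\<forall>x\<in>bool_space n. \<forall>j<n. f x j \<le> 1)"

text \<open>Threshold construction. thr j0 h k is the threshold s attached to the k-th literal
of the h-th clause of the DNF D j0; for a variable j with m j > 1 it must lie in
{0..m j - 1}; literals of variables with m j = 1 are unchanged (x_j is read as x_j = 1).\<close>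
definition lit_holds :: "(nat \<Rightarrow> nat) \<Rightarrow> literal \<Rightarrow> nat \<Rightarrow> (nat \<Rightarrow> nat) \<Rightarrow> bool" where
  "lit_holds m l s x \<longleftrightarrow>
     (if m (fst l) > 1 then (x (fst l) \<ge> s + 1) = snd l else (x (fst l) = 1) = snd l)"

definition threshold_cond ::
  "(nat \<Rightarrow> nat) \<Rightarrow> (nat \<Rightarrow> dnf) \<Rightarrow> (nat \<Rightarrow> nat \<Rightarrow> nat \<Rightarrow> nat) \<Rightarrow> nat \<Rightarrow> (nat \<Rightarrow> nat) \<Rightarrow> bool" where
  "threshold_cond m D thr j0 x \<longleftrightarrow>
     (\<exists>h<length (D j0). \<forall>k<length (D j0 ! h). lit_holds m (D j0 ! h ! k) (thr j0 h k) x)"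

definition thresholds_ok :: "nat \<Rightarrow> (nat \<Rightarrow> nat) \<Rightarrow> (nat \<Rightarrow> dnf) \<Rightarrow> (nat \<Rightarrow> nat \<Rightarrow> nat \<Rightarrow> nat) \<Rightarrow> bool" where
  "thresholds_ok n m D thr \<longleftrightarrow> (\<forall>j0<n. \<forall>h<length (D j0). \<forall>k<length (D j0 ! h).
      m (fst (D j0 ! h ! k)) > 1 \<longrightarrow> thr j0 h k < m (fst (D j0 ! h ! k)))"

text \<open>h_j(x) = max(0, min(m_j, x_j + H_j(x))) with H_j = +1 / -1.\<close>
definition threshold_model ::
  "nat \<Rightarrow> (nat \<Rightarrow> nat) \<Rightarrow> (nat \<Rightarrow> dnf) \<Rightarrow> (nat \<Rightarrow> nat \<Rightarrow> nat \<Rightarrow> nat) \<Rightarrow> (nat \<Rightarrow> nat) \<Rightarrow> nat \<Rightarrow> nat" where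
  "threshold_model n m D thr x j =
     (if j < n then (if threshold_cond m D thr j x then min (m j) (x j + 1) else x j - 1) else x j)"

definition self_inhibited :: "(nat \<Rightarrow> dnf) \<Rightarrow> nat \<Rightarrow> bool" where
  "self_inhibited D j \<longleftrightarrow> (\<exists>c\<in>set (D j). (j, False) \<in> set c)"

definition lift_state :: "nat \<Rightarrow> (nat \<Rightarrow> nat) \<Rightarrow> (nat \<Rightarrow> nat) \<Rightarrow> nat \<Rightarrow> nat" where
  "lift_state n m a j = (if j < n \<and> m j > 1 \<and> a j = 1 then m j else a j)"

end

theory Submission
  imports Defs
begin

text \<open>On a lifted Boolean state every threshold literal has the truth value of its
Boolean literal, so the threshold condition of component \<open>j\<close> there equals \<open>f\<^sub>j\<close>. A
Boolean transition flipping a component \<open>i\<close> with \<open>m\<^sub>i = 1\<close> is therefore a single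
transition of \<open>h\<close>. If \<open>m\<^sub>i > 1\<close>, the variable \<open>x\<^sub>i\<close> occurs in the DNF of \<open>f\<^sub>i\<close> only
positively, so the threshold condition of \<open>i\<close> is monotone in the level of \<open>x\<^sub>i\<close>: if it
holds at level \<open>0\<close> it holds at every level, and if it fails at level \<open>m\<^sub>i\<close> it fails at
every level. Hence \<open>h\<close> can move \<open>x\<^sub>i\<close> step by step from one extreme level to the other
while all other coordinates stay put.\<close>

lemma fun_upd_in_state_space:
  assumes "y \<in> state_space n m" "j < n" "v \<le> m j"
  shows "y(j := v) \<in> state_space n m"
  using assms unfolding state_space_def by auto

lemma lift_state_in_state_space:
  assumes "x \<in> bool_space n" "\<forall>j<n. m j \<ge> 1"
  shows "lift_state n m x \<in> state_space n m"
  using assms unfolding state_space_def lift_state_def by auto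

lemma lift_state_fun_upd:
  assumes "i < n" "m i \<ge> 1"
  shows "lift_state n m (x(i := 1)) = (lift_state n m x)(i := m i)"
    and "lift_state n m (x(i := 0)) = (lift_state n m x)(i := 0)"
  using assms by (auto simp: lift_state_def fun_eq_iff)

lemma lit_holds_lift_state:
  assumes "x \<in> bool_space n" "fst l < n" "m (fst l) > 1 \<longrightarrow> s < m (fst l)"
  shows "lit_holds m l s (lift_state n m x) \<longleftrightarrow> (x (fst l) = 1) = snd l"
proof -
  have "x (fst l) \<le> 1" using assms(1,2) unfolding state_space_def by auto
  then show ?thesis using assms(2,3) unfolding lit_holds_def lift_state_def
    by (cases "x (fst l) = 1") auto
qed

lemma threshold_cond_lift_state:
  assumes "x \<in> bool_space n" "j < n" "dnf_vars_ok n (D j)" "thresholds_ok n m D thr"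
  shows "threshold_cond m D thr j (lift_state n m x) \<longleftrightarrow> eval_dnf (D j) x"
proof -
  have lit: "lit_holds m (D j ! c ! k) (thr j c k) (lift_state n m x)
      \<longleftrightarrow> (x (fst (D j ! c ! k)) = 1) = snd (D j ! c ! k)"
    if "c < length (D j)" "k < length (D j ! c)" for c k
  proof (rule lit_holds_lift_state[OF assms(1)])
    show "fst (D j ! c ! k) < n"
      using assms(3) that unfolding dnf_vars_ok_def by (meson nth_mem)
    show "m (fst (D j ! c ! k)) > 1 \<longrightarrow> thr j c k < m (fst (D j ! c ! k))"
      using assms(2,4) that unfolding thresholds_ok_def by blast
  qed
  have "threshold_cond m D thr j (lift_state n m x) \<longleftrightarrow>
      (\<exists>c<length (D j). \<forall>l\<in>set (D j ! c). (x (fst l) = 1) = snd l)"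
    unfolding threshold_cond_def all_set_conv_all_nth using lit by auto
  also have "\<dots> \<longleftrightarrow> eval_dnf (D j) x"
    unfolding eval_dnf_def by (metis in_set_conv_nth)
  finally show ?thesis .
qed

lemma lit_holds_fun_upd_mono:
  assumes "m i > 1" "fst l = i \<longrightarrow> snd l" "v \<le> w" "lit_holds m l s (y(i := v))"
  shows "lit_holds m l s (y(i := w))"
  using assms unfolding lit_holds_def by (cases "fst l = i") auto

lemma threshold_cond_fun_upd_mono:
  assumes "m j > 1" "\<not> self_inhibited D j" "v \<le> w"
    and "threshold_cond m D thr j (y(j := v))"
  shows "threshold_cond m D thr j (y(j := w))"
proof -
  obtain c where c: "c < length (D j)"
    and lits: "\<forall>k<length (D j ! c). lit_holds m (D j ! c ! k) (thr j c k) (y(j := v))"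
    using assms(4) unfolding threshold_cond_def by blast
  have "fst (D j ! c ! k) = j \<longrightarrow> snd (D j ! c ! k)" if "k < length (D j ! c)" for k
    using assms(2) c that nth_mem unfolding self_inhibited_def
    by (metis prod.collapse)
  then show ?thesis
    using c lits lit_holds_fun_upd_mono[where m = m and i = j, OF assms(1) _ assms(3)]
    unfolding threshold_cond_def by blast
qed

lemma async_trans_threshold_model_incr:
  assumes "y \<in> state_space n m" "j < n" "y j < m j" "threshold_cond m D thr j y"
  shows "async_trans n m (threshold_model n m D thr) y (y(j := y j + 1))"
proof -
  have "threshold_model n m D thr y j = y j + 1"
    using assms(2-4) unfolding threshold_model_def by simp
  then show ?thesis
    unfolding async_trans_def using assms(1,2) by (intro conjI exI[of _ j]) simp_all
qed

lemma async_trans_threshold_model_decr: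
  assumes "y \<in> state_space n m" "j < n" "y j > 0" "\<not> threshold_cond m D thr j y"
  shows "async_trans n m (threshold_model n m D thr) y (y(j := y j - 1))"
proof -
  have "threshold_model n m D thr y j = y j - 1"
    using assms(2,4) unfolding threshold_model_def by simp
  then show ?thesis
    unfolding async_trans_def using assms(1-3) by (intro conjI exI[of _ j]) auto
qed

lemma trajectory_threshold_model_climb:
  assumes "y \<in> state_space n m" "j < n" "v \<le> w" "w \<le> m j"
    and "\<forall>u. v \<le> u \<longrightarrow> u < w \<longrightarrow> threshold_cond m D thr j (y(j := u))"
  shows "trajectory n m (threshold_model n m D thr) (y(j := v)) (y(j := w))"
  using assms(3,4)
proof (induction w rule: dec_induct)
  case base
  show ?case unfolding trajectory_def by simp
next
  case (step u)
  have "y(j := u) \<in> state_space n m"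
    using fun_upd_in_state_space[OF assms(1,2)] step by simp
  then have "async_trans n m (threshold_model n m D thr) (y(j := u)) (y(j := u, j := u + 1))"
    using async_trans_threshold_model_incr[of "y(j := u)" n m j D thr] assms(2,5) step by simp
  then show ?case using step unfolding trajectory_def by simp
qed

lemma trajectory_threshold_model_descend:
  assumes "y \<in> state_space n m" "j < n" "v \<le> w" "w \<le> m j"
    and "\<forall>u. v < u \<longrightarrow> u \<le> w \<longrightarrow> \<not> threshold_cond m D thr j (y(j := u))"
  shows "trajectory n m (threshold_model n m D thr) (y(j := w)) (y(j := v))"
  using assms(3)
proof (induction v rule: inc_induct)
  case base
  show ?case unfolding trajectory_def by simp
next
  case (step u)
  have "y(j := Suc u) \<in> state_space n m"
    using fun_upd_in_state_space[OF assms(1,2)] assms(4) step by simp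
  then have "async_trans n m (threshold_model n m D thr) (y(j := Suc u)) (y(j := Suc u, j := u))"
    using async_trans_threshold_model_decr[of "y(j := Suc u)" n m j D thr] assms(2,4,5) step
    by simp
  then show ?case using step unfolding trajectory_def
    by (simp add: rtranclp.rtrancl_into_rtrancl)
qed

locale threshold_network =
  fixes n :: nat and m :: "nat \<Rightarrow> nat" and f :: "(nat \<Rightarrow> nat) \<Rightarrow> nat \<Rightarrow> nat"
    and D :: "nat \<Rightarrow> dnf" and thr :: "nat \<Rightarrow> nat \<Rightarrow> nat \<Rightarrow> nat"
  assumes f_boolean: "boolean_model n f"
    and f_represented: "\<forall>j<n. represents n f j (D j)"
    and levels_pos: "\<forall>j<n. m j \<ge> 1"
    and thresholds_valid: "thresholds_ok n m D thr"
    and no_self_inhibition: "\<forall>j<n. m j > 1 \<longrightarrow> \<not> self_inhibited D j"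
begin

lemma threshold_cond_lift_state_iff:
  assumes "x \<in> bool_space n" "j < n"
  shows "threshold_cond m D thr j (lift_state n m x) \<longleftrightarrow> f x j = 1"
  using threshold_cond_lift_state[OF assms _ thresholds_valid] f_represented assms
  unfolding represents_def by blast

lemma threshold_cond_lift_state_raise:
  assumes "x \<in> bool_space n" "i < n" "x i = 0" "f x i = 1" "u < m i"
  shows "threshold_cond m D thr i ((lift_state n m x)(i := u))"
proof -
  have "(lift_state n m x)(i := 0) = lift_state n m x"
    using assms(3) by (auto simp: lift_state_def)
  then have bottom: "threshold_cond m D thr i ((lift_state n m x)(i := 0))"
    using threshold_cond_lift_state_iff assms by simp
  show ?thesis
  proof (cases "m i > 1")
    case True
    then show ?thesis
      using threshold_cond_fun_upd_mono[where m = m and j = i, OF True _ _ bottom]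
        no_self_inhibition assms(2) by simp
  next
    case False
    then have "u = 0" using assms(5) by linarith
    then show ?thesis using bottom by simp
  qed
qed

lemma threshold_cond_lift_state_lower:
  assumes "x \<in> bool_space n" "i < n" "x i = 1" "f x i = 0" "0 < u" "u \<le> m i"
  shows "\<not> threshold_cond m D thr i ((lift_state n m x)(i := u))"
proof -
  have "(lift_state n m x)(i := m i) = lift_state n m x"
    using assms(2,3) levels_pos[rule_format, OF assms(2)] by (auto simp: lift_state_def)
  then have top: "\<not> threshold_cond m D thr i ((lift_state n m x)(i := m i))"
    using threshold_cond_lift_state_iff assms by simp
  show ?thesis
  proof (cases "m i > 1")
    case True
    then show ?thesis
      using threshold_cond_fun_upd_mono[where m = m and j = i, OF True _ assms(6)] top
        no_self_inhibition assms(2) by blast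
  next
    case False
    then have "u = m i" using assms(5,6) by linarith
    then show ?thesis using top by simp
  qed
qed

lemma trajectory_lift_state_async_trans:
  assumes "async_trans n (\<lambda>_. 1) f x z"
  shows "trajectory n m (threshold_model n m D thr) (lift_state n m x) (lift_state n m z)"
proof -
  obtain i where x: "x \<in> bool_space n" and i: "i < n" "x i \<noteq> f x i"
    and z: "z = x(i := (if f x i > x i then x i + 1 else x i - 1))"
    using assms unfolding async_trans_def by blast
  let ?b = "lift_state n m x"
  have b: "?b \<in> state_space n m" using lift_state_in_state_space[OF x levels_pos] .
  have mi: "m i \<ge> 1" using levels_pos i(1) by blast
  have "x i \<le> 1" "f x i \<le> 1"
    using x f_boolean i(1) unfolding state_space_def boolean_model_def by auto
  then consider (up) "x i = 0" "f x i = 1" | (down) "x i = 1" "f x i = 0"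
    using i(2) by linarith
  then show ?thesis
  proof cases
    case up
    have "trajectory n m (threshold_model n m D thr) (?b(i := 0)) (?b(i := m i))"
      using trajectory_threshold_model_climb[OF b i(1), of 0 "m i"]
        threshold_cond_lift_state_raise[OF x i(1) up] by simp
    moreover have "?b(i := 0) = ?b" using up by (auto simp: lift_state_def)
    moreover have "lift_state n m z = ?b(i := m i)"
      using up z lift_state_fun_upd(1)[where m = m and i = i, OF i(1) mi] by simp
    ultimately show ?thesis by simp
  next
    case down
    have "trajectory n m (threshold_model n m D thr) (?b(i := m i)) (?b(i := 0))"
      using trajectory_threshold_model_descend[OF b i(1), of 0 "m i"]
        threshold_cond_lift_state_lower[OF x i(1) down] by simp
    moreover have "?b(i := m i) = ?b" using down mi i(1) by (auto simp: lift_state_def)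
    moreover have "lift_state n m z = ?b(i := 0)"
      using down z lift_state_fun_upd(2)[where m = m and i = i, OF i(1) mi] by simp
    ultimately show ?thesis by simp
  qed
qed

end

theorem proposition1:
  fixes n :: nat and m :: "nat \<Rightarrow> nat"
    and f h :: "(nat \<Rightarrow> nat) \<Rightarrow> nat \<Rightarrow> nat"
    and D :: "nat \<Rightarrow> dnf" and thr :: "nat \<Rightarrow> nat \<Rightarrow> nat \<Rightarrow> nat"
    and a a' :: "nat \<Rightarrow> nat"
  assumes "n \<ge> 1"
    and "boolean_model n f"
    and "\<forall>j<n. m j \<ge> 1"
    and "\<exists>j<n. m j > 1"
    and "\<forall>j<n. shortest_dnf n f j (D j)"
    and "thresholds_ok n m D thr"
    and "h = threshold_model n m D thr"
    and "refinement n m h f"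
    and "\<forall>j<n. m j > 1 \<longrightarrow> \<not> self_inhibited D j"
    and "a \<in> bool_space n" and "a' \<in> bool_space n"
    and "trajectory n (\<lambda>_. 1) f a a'"
  shows "trajectory n m h (lift_state n m a) (lift_state n m a')"
proof -
  have "\<forall>j<n. represents n f j (D j)"
    using assms(5) unfolding shortest_dnf_def by blast
  then interpret threshold_network n m f D thr
    using assms(2,3,6,9) by unfold_locales
  have "(async_trans n (\<lambda>_. 1) f)\<^sup>*\<^sup>* a a'"
    using assms(12) unfolding trajectory_def .
  then show ?thesis
  proof (induction rule: rtranclp_induct)
    case base
    show ?case unfolding trajectory_def by simp
  next
    case (step y z)
    then show ?case
      using trajectory_lift_state_async_trans assms(7)
      unfolding trajectory_def by (meson rtranclp_trans)
  qed
qed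

end
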